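(* Let $d$ be even, let $n>2d$ be prime, let $\omega=e^{2\pi i/n}$, and let $T$ be a $d\times d$ Cauchy matrix over $\mathbb{F}_n$. Define the $n^d\times n^d$ complex matrix $W_T$ by $(W_T)_{(i_1,\dots,i_d),(j_1,\dots,j_d)}=\omega^{(i_1,\dots,i_d)\,T\,(j_1,\dots,j_d)^{\top}}$ (the exponent computed in $\mathbb{F}_n$). Then for every $\kappa\subseteq[d]$, the matrix $W_T^{\top_\kappa}$ has rank $n^d$.
   Context: A Cauchy matrix over $\mathbb{F}_n$ is $T_{ab}=1/(x_a-y_b)$ for pairwise distinct elements $x_1,\dots,x_d,y_1,\dots,y_d\in\mathbb{F}_n$; every square submatrix of it is nonsingular. Indices $i_k,j_k\in[n]$ are regarded as elements of $\mathbb{F}_n$. For $k\in[d]$, $M^{\top_k}_{(i_1,\dots,i_d),(j_1,\dots,j_d)}=M_{(\dots,i_{k-1},j_k,i_{k+1},\dots),(\dots,j_{k-1},i_k,j_{k+1},\dots)}$ and $M^{\top_\kappa}$ composes these over $k\in\kappa$. *)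

theory Defs
  imports Complex_Main "Jordan_Normal_Form.DL_Rank"
begin

text \<open>Elements of F_n are represented by integers modulo the prime n.
  A d x d Cauchy matrix over F_n (rows/columns indexed by 0..d-1):
  there are pairwise distinct residues x_0..x_{d-1}, y_0..y_{d-1} mod n with
  T a b * (x a - y b) = 1 (mod n), i.e. T a b = 1/(x a - y b) in F_n.\<close>
definition cauchy_mod :: "nat \<Rightarrow> nat \<Rightarrow> (nat \<Rightarrow> nat \<Rightarrow> int) \<Rightarrow> bool" where
  "cauchy_mod n d T \<longleftrightarrow>
     (\<exists>x y :: nat \<Rightarrow> int.
        (\<forall>a<d. x a \<in> {0..<int n} \<and> y a \<in> {0..<int n}) \<and>
        inj_on x {0..<d} \<and> inj_on y {0..<d} \<and>
        (\<forall>a<d. \<forall>b<d. x a \<noteq> y b) \<and>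
        (\<forall>a<d. \<forall>b<d. (T a b * (x a - y b)) mod int n = 1 mod int n))"

text \<open>Multi-indices (i_1,...,i_d) in [n]^d (with [n] = {0,...,n-1}) are encoded
  as the number sum_k i_k n^k; digit n k a is the k-th coordinate (0-based).\<close>
definition digit :: "nat \<Rightarrow> nat \<Rightarrow> nat \<Rightarrow> nat" where
  "digit n k a = a div n ^ k mod n"

definition tup_enc :: "nat \<Rightarrow> nat \<Rightarrow> (nat \<Rightarrow> nat) \<Rightarrow> nat" where
  "tup_enc n d f = (\<Sum>k<d. f k * n ^ k)"

definition W_mat :: "nat \<Rightarrow> nat \<Rightarrow> (nat \<Rightarrow> nat \<Rightarrow> int) \<Rightarrow> complex mat" where
  "W_mat n d T = mat (n ^ d) (n ^ d) (\<lambda>(a, b).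
     cis (2 * pi / n) ^ nat ((\<Sum>k<d. \<Sum>l<d. int (digit n k a) * T k l * int (digit n l b)) mod int n))"

text \<open>Partial transpose over the coordinate set kappa (0-based coordinates):
  coordinates k in kappa of row and column multi-indices are exchanged.\<close>
definition ptrans :: "nat \<Rightarrow> nat \<Rightarrow> nat set \<Rightarrow> 'a mat \<Rightarrow> 'a mat" where
  "ptrans n d \<kappa> M = mat (dim_row M) (dim_col M) (\<lambda>(a, b).
     M $$ (tup_enc n d (\<lambda>k. if k \<in> \<kappa> then digit n k b else digit n k a),
           tup_enc n d (\<lambda>k. if k \<in> \<kappa> then digit n k a else digit n k b)))"

end

(*
  The rows of M = ptrans n d kappa (W_mat n d T) are orthogonal, so M M^* = n^d I.  The inner product of
  rows a and a' is a sum over b of omega^(E(a,b) - E(a',b)); this exponent difference is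
  affine in the digits b_m of b with coefficients c_m, so the sum factorises over the digits
  and vanishes unless n divides every c_m.  With v = a - a' (digitwise), the c_m are the
  entries of T[kappa,kappa] v|kappa and of v|L T[L,L], L the complement of kappa.  Square
  Cauchy matrices stay nonsingular modulo the prime n, so n | c_m for all m forces a = a'.
*)
theory Submission
  imports Defs "HOL-Computational_Algebra.Polynomial" "HOL-Number_Theory.Cong"
begin

section \<open>Square Cauchy matrices are nonsingular modulo a prime\<close>

lemma prime_dvd_poly_if_dvd_on_incongruent_set:
  fixes p :: int and f :: "int poly"
  assumes "prime p" and "finite R" and "inj_on (\<lambda>r. r mod p) R" and "degree f < card R"
    and "\<forall>r\<in>R. p dvd poly f r"
  shows "p dvd poly f z"
  using assms(2-5)
proof (induction R arbitrary: f rule: finite_induct)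
  case empty
  then show ?case by simp
next
  case (insert r R)
  have "p dvd poly f r" using insert.prems by simp
  show ?case
  proof (cases "degree f = 0")
    case True
    then obtain c where "f = [:c:]" by (metis degree_eq_zeroE)
    then show ?thesis using \<open>p dvd poly f r\<close> by simp
  next
    case False
    define g where "g = synthetic_div f r"
    have "f = [:-r, 1:] * g + [:poly f r:]"
      unfolding g_def by (rule synthetic_div_correct'[symmetric])
    then have f_eq: "poly f s = (s - r) * poly g s + poly f r" for s
      by (subst \<open>f = _\<close>) (simp add: algebra_simps)
    have "p dvd poly g s" if "s \<in> R" for s
    proof -
      have "(s - r) * poly g s = poly f s - poly f r"
        using f_eq[of s] by simp
      moreover have "p dvd poly f s"
        using insert.prems(3) \<open>s \<in> R\<close> by simp
      ultimately have "p dvd (s - r) * poly g s"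
        using \<open>p dvd poly f r\<close> by simp
      moreover have "\<not> p dvd s - r"
      proof
        assume "p dvd s - r"
        then have "s mod p = r mod p" by (simp add: mod_eq_dvd_iff)
        then show False using insert.hyps(2) insert.prems(1) \<open>s \<in> R\<close> by (auto simp: inj_on_def)
      qed
      ultimately show ?thesis using \<open>prime p\<close> by (simp add: prime_dvd_mult_iff)
    qed
    moreover have "degree g < card R"
      using False insert.hyps insert.prems(2) by (simp add: g_def degree_synthetic_div)
    ultimately have "p dvd poly g z"
      using insert.IH insert.prems(1) by (simp add: inj_on_insert)
    then show ?thesis using \<open>p dvd poly f r\<close> f_eq[of z] by simp
  qed
qed

lemma lagrange_combination_poly:
  fixes x u :: "'b \<Rightarrow> 'a :: idom"
  assumes "finite A" and "A \<noteq> {}"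
  obtains P where "degree P < card A"
    and "\<And>z. poly P z = (\<Sum>a\<in>A. u a * (\<Prod>a'\<in>A - {a}. x a' - z))"
proof
  define P where "P = (\<Sum>a\<in>A. Polynomial.smult (u a) (\<Prod>a'\<in>A - {a}. [:x a', -1:]))"
  show "poly P z = (\<Sum>a\<in>A. u a * (\<Prod>a'\<in>A - {a}. x a' - z))" for z
    unfolding P_def by (simp add: poly_sum poly_prod)
  have "degree (Polynomial.smult (u a) (\<Prod>a'\<in>A - {a}. [:x a', -1:])) \<le> card A - 1" if "a \<in> A" for a
  proof -
    have "degree (\<Prod>a'\<in>A - {a}. [:x a', -1:]) \<le> (\<Sum>a'\<in>A - {a}. degree [:x a', -1:])"
      using degree_prod_sum_le[of "A - {a}" "\<lambda>a'. [:x a', -1:]"] assms by (simp add: o_def)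
    also have "\<dots> = card A - 1" using assms \<open>a \<in> A\<close> by simp
    finally show ?thesis by (meson degree_smult_le order.trans)
  qed
  then have "degree P \<le> card A - 1"
    unfolding P_def by (intro degree_sum_le) (use assms in auto)
  moreover have "card A > 0"
    using assms by (simp add: card_gt_0_iff)
  ultimately show "degree P < card A"
    by linarith
qed

lemma lagrange_combination_at_node:
  fixes x u :: "'b \<Rightarrow> 'a :: comm_ring_1"
  assumes "finite A" and "c \<in> A"
  shows "(\<Sum>a\<in>A. u a * (\<Prod>a'\<in>A - {a}. x a' - x c)) = u c * (\<Prod>a'\<in>A - {c}. x a' - x c)"
proof -
  have "(\<Prod>a'\<in>A - {a}. x a' - x c) = 0" if "a \<in> A - {c}" for a
    using assms that by (intro prod_zero) auto
  then show ?thesis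
    using assms by (simp add: sum.remove)
qed

lemma cauchy_clear_denominators:
  fixes p z :: int
  assumes "finite A" and "\<And>a. a \<in> A \<Longrightarrow> [C a * (x a - z) = 1] (mod p)"
  shows "[(\<Sum>a\<in>A. u a * (\<Prod>a'\<in>A - {a}. x a' - z)) = (\<Sum>a\<in>A. u a * C a) * (\<Prod>a\<in>A. x a - z)] (mod p)"
proof -
  have "[u a * (\<Prod>a'\<in>A - {a}. x a' - z) = u a * C a * (\<Prod>a\<in>A. x a - z)] (mod p)" if "a \<in> A" for a
  proof -
    have "[u a * (\<Prod>a'\<in>A - {a}. x a' - z) * 1 = u a * (\<Prod>a'\<in>A - {a}. x a' - z) * (C a * (x a - z))] (mod p)"
      using assms(2)[OF that] by (intro cong_mult cong_refl) (simp add: cong_sym)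
    also have "u a * (\<Prod>a'\<in>A - {a}. x a' - z) * (C a * (x a - z)) = u a * C a * (\<Prod>a\<in>A. x a - z)"
      using assms(1) that by (simp add: prod.remove algebra_simps)
    finally show ?thesis by simp
  qed
  then show ?thesis
    by (simp add: sum_distrib_right cong_sum)
qed

text \<open>Clearing denominators in \<open>\<Sum>a. u a / (x a - z)\<close> gives a polynomial in \<open>z\<close> of degree
  below \<open>card A\<close> that vanishes modulo \<open>p\<close> at the \<open>card B\<close> points \<open>y b\<close>, hence everywhere;
  at \<open>z = x c\<close> only the term of \<open>u c\<close> survives.\<close>

lemma cauchy_left_kernel_mod_prime:
  fixes p :: int and x :: "'a \<Rightarrow> int" and y :: "'b \<Rightarrow> int"
  assumes "prime p" and "finite A" and "finite B" and "card A \<le> card B"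
    and "inj_on (\<lambda>a. x a mod p) A" and "inj_on (\<lambda>b. y b mod p) B"
    and "\<And>a b. a \<in> A \<Longrightarrow> b \<in> B \<Longrightarrow> [C a b * (x a - y b) = 1] (mod p)"
    and "\<And>b. b \<in> B \<Longrightarrow> p dvd (\<Sum>a\<in>A. u a * C a b)"
    and "c \<in> A"
  shows "p dvd u c"
proof -
  obtain P where deg: "degree P < card A"
    and P: "\<And>z. poly P z = (\<Sum>a\<in>A. u a * (\<Prod>a'\<in>A - {a}. x a' - z))"
    using lagrange_combination_poly assms(2,9) by blast
  have roots: "\<forall>r\<in>y ` B. p dvd poly P r"
  proof
    fix r assume "r \<in> y ` B"
    obtain b where "b \<in> B" and "r = y b" using \<open>r \<in> y ` B\<close> by blast
    have "[poly P r = (\<Sum>a\<in>A. u a * C a b) * (\<Prod>a\<in>A. x a - y b)] (mod p)"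
      unfolding P \<open>r = y b\<close> using assms(2,7) \<open>b \<in> B\<close> by (intro cauchy_clear_denominators) auto
    then show "p dvd poly P r"
      using assms(8)[OF \<open>b \<in> B\<close>] by (simp add: cong_dvd_iff)
  qed
  have "card (y ` B) = card B" and inj: "inj_on (\<lambda>r. r mod p) (y ` B)"
    using assms(6) by (auto simp: card_image inj_on_def)
  then have "degree P < card (y ` B)"
    using assms(4) deg by linarith
  then have "p dvd poly P (x c)"
    using prime_dvd_poly_if_dvd_on_incongruent_set[OF assms(1) _ inj _ roots] assms(3) by blast
  also have "poly P (x c) = u c * (\<Prod>a'\<in>A - {c}. x a' - x c)"
    unfolding P using assms(2,9) by (rule lagrange_combination_at_node)
  finally have "p dvd u c * (\<Prod>a'\<in>A - {c}. x a' - x c)" .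
  moreover have "\<not> p dvd (\<Prod>a'\<in>A - {c}. x a' - x c)"
  proof
    assume "p dvd (\<Prod>a'\<in>A - {c}. x a' - x c)"
    then obtain a' where "a' \<in> A - {c}" and "p dvd x a' - x c"
      using assms(1,2) by (auto simp: prime_dvd_prod_iff)
    then show False
      using assms(5,9) by (auto simp: mod_eq_dvd_iff[symmetric] inj_on_def)
  qed
  ultimately show ?thesis
    using assms(1) by (simp add: prime_dvd_mult_iff)
qed

lemma cauchy_right_kernel_mod_prime:
  fixes p :: int and x :: "'a \<Rightarrow> int" and y :: "'b \<Rightarrow> int"
  assumes "prime p" and "finite A" and "finite B" and "card B \<le> card A"
    and "inj_on (\<lambda>a. x a mod p) A" and "inj_on (\<lambda>b. y b mod p) B"
    and "\<And>a b. a \<in> A \<Longrightarrow> b \<in> B \<Longrightarrow> [C a b * (x a - y b) = 1] (mod p)"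
    and "\<And>a. a \<in> A \<Longrightarrow> p dvd (\<Sum>b\<in>B. C a b * u b)"
    and "c \<in> B"
  shows "p dvd u c"
proof (rule cauchy_left_kernel_mod_prime[where C = "\<lambda>b a. - C a b"])
  show "[- C a b * (y b - x a) = 1] (mod p)" if "b \<in> B" and "a \<in> A" for a b
    using assms(7)[OF that(2,1)] by (simp add: algebra_simps)
  show "p dvd (\<Sum>b\<in>B. u b * - C a b)" if "a \<in> A" for a
    using assms(8)[OF that] by (simp add: sum_negf mult.commute)
qed (use assms in auto)

section \<open>Additive characters of \<open>\<int>/n\<close>\<close>

definition add_char :: "nat \<Rightarrow> int \<Rightarrow> complex" where
  "add_char n z = cis (2 * pi * of_int z / real n)"

lemma add_char_0 [simp]: "add_char n 0 = 1"
  by (simp add: add_char_def)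

lemma add_char_add: "add_char n (a + b) = add_char n a * add_char n b"
  unfolding add_char_def cis_mult by (simp add: distrib_left add_divide_distrib)

lemma add_char_sum: "add_char n (\<Sum>i\<in>A. f i) = (\<Prod>i\<in>A. add_char n (f i))"
  by (induction A rule: infinite_finite_induct) (simp_all add: add_char_add)

lemma add_char_cnj: "cnj (add_char n z) = add_char n (- z)"
  unfolding add_char_def cis_cnj by simp

lemma add_char_pow: "add_char n z ^ t = add_char n (z * int t)"
  unfolding add_char_def DeMoivre by (simp add: algebra_simps)

lemma add_char_eq_1_iff:
  assumes "n > 0"
  shows "add_char n z = 1 \<longleftrightarrow> int n dvd z"
proof
  assume "add_char n z = 1"
  then have "cos (2 * pi * of_int z / real n) = 1"
    by (simp add: add_char_def complex_eq_iff)
  then obtain k :: int where "2 * pi * of_int z / real n = of_int k * 2 * pi"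
    by (auto simp: cos_one_2pi_int)
  then have "real_of_int z = real_of_int (k * int n)"
    using assms by (simp add: field_simps)
  then show "int n dvd z"
    by (simp only: of_int_eq_iff) simp
next
  assume "int n dvd z"
  then obtain k where "z = int n * k" ..
  then have "2 * pi * of_int z / real n = 2 * pi * of_int k"
    using assms by simp
  then show "add_char n z = 1"
    by (simp add: add_char_def)
qed

lemma add_char_mod:
  assumes "n > 0"
  shows "add_char n (z mod int n) = add_char n z"
proof -
  have "add_char n z = add_char n (z mod int n) * add_char n (int n * (z div int n))"
    by (simp flip: add_char_add)
  then show ?thesis
    using add_char_eq_1_iff[OF assms] by simp
qed

lemma sum_add_char_multiples:
  assumes "n > 0"
  shows "(\<Sum>t<n. add_char n (z * int t)) = (if int n dvd z then of_nat n else 0)"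
proof (cases "int n dvd z")
  case True
  then have "add_char n (z * int t) = 1" for t
    using add_char_eq_1_iff[OF assms] by simp
  then show ?thesis using True by simp
next
  case False
  have "(\<Sum>t<n. add_char n (z * int t)) = (\<Sum>t<n. add_char n z ^ t)"
    by (simp add: add_char_pow)
  also have "\<dots> = 0"
    using False add_char_eq_1_iff[OF assms] add_char_pow[of n z n] by (simp add: sum_gp_strict)
  finally show ?thesis using False by simp
qed

lemma cis_power_mod_eq_add_char:
  assumes "n > 0"
  shows "cis (2 * pi / n) ^ nat (z mod int n) = add_char n z"
proof -
  have "cis (2 * pi / n) ^ nat (z mod int n) = add_char n (z mod int n)"
    unfolding DeMoivre add_char_def using assms by (simp add: algebra_simps)
  then show ?thesis
    using add_char_mod[OF assms] by simp
qed

section \<open>Base-\<open>n\<close> digits\<close>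

lemma digit_0: "digit n 0 a = a mod n"
  by (simp add: digit_def)

lemma digit_Suc: "digit n (Suc k) a = digit n k (a div n)"
  by (simp add: digit_def div_mult2_eq)

lemma digit_less: "n > 0 \<Longrightarrow> digit n k a < n"
  by (simp add: digit_def)

lemma tup_enc_Suc: "tup_enc n (Suc d) f = f 0 + n * tup_enc n d (\<lambda>k. f (Suc k))"
  by (simp add: tup_enc_def sum.lessThan_Suc_shift sum_distrib_left algebra_simps
      del: sum.lessThan_Suc)

lemma tup_enc_less:
  assumes "\<forall>k<d. f k < n"
  shows "tup_enc n d f < n ^ d"
  using assms
proof (induction d arbitrary: f)
  case 0
  then show ?case by (simp add: tup_enc_def)
next
  case (Suc d)
  then have "tup_enc n d (\<lambda>k. f (Suc k)) + 1 \<le> n ^ d" and "f 0 < n"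
    by (simp_all add: Suc_le_eq)
  then have "f 0 + n * tup_enc n d (\<lambda>k. f (Suc k)) < n * (tup_enc n d (\<lambda>k. f (Suc k)) + 1)"
    by simp
  also have "\<dots> \<le> n * n ^ d"
    using \<open>_ + 1 \<le> n ^ d\<close> by (rule mult_left_mono) simp
  finally show ?case
    by (simp add: tup_enc_Suc)
qed

lemma digit_tup_enc:
  assumes "\<forall>k<d. f k < n" and "k < d"
  shows "digit n k (tup_enc n d f) = f k"
  using assms
proof (induction d arbitrary: f k)
  case 0
  then show ?case by simp
next
  case (Suc d)
  then have "n > 0"
    by (metis zero_less_Suc gr_zeroI less_nat_zero_code)
  with Suc show ?case
    by (cases k) (auto simp: tup_enc_Suc digit_0 digit_Suc)
qed

lemma eq_if_digits_eq:
  assumes "a < n ^ d" and "b < n ^ d" and "\<forall>k<d. digit n k a = digit n k b"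
  shows "a = b"
  using assms
proof (induction d arbitrary: a b)
  case 0
  then show ?case by simp
next
  case (Suc d)
  have "a mod n = b mod n"
    using Suc.prems(3) by (auto simp: digit_0 dest: spec[of _ 0])
  moreover have "a div n = b div n"
  proof (rule Suc.IH)
    show "a div n < n ^ d" and "b div n < n ^ d"
      using Suc.prems(1,2) by (simp_all add: less_mult_imp_div_less mult.commute)
    show "\<forall>k<d. digit n k (a div n) = digit n k (b div n)"
      using Suc.prems(3) by (auto simp flip: digit_Suc)
  qed
  ultimately show ?case
    by (metis div_mod_decomp)
qed

lemma sum_lessThan_mult_split:
  fixes m n :: nat
  shows "(\<Sum>b<m * n. h b) = (\<Sum>q<m. \<Sum>t<n. h (q * n + t))"
proof -
  have "(\<Sum>b\<in>{q * n..<q * n + n}. h b) = (\<Sum>t<n. h (q * n + t))" for q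
    by (rule sum.reindex_bij_witness[where j = "\<lambda>b. b - q * n" and i = "\<lambda>t. q * n + t"]) auto
  then show ?thesis
    by (simp add: sum.nat_group[symmetric])
qed

lemma sum_digits_prod:
  fixes g :: "nat \<Rightarrow> nat \<Rightarrow> 'a :: comm_semiring_1"
  assumes "n > 0"
  shows "(\<Sum>b<n ^ d. \<Prod>m<d. g m (digit n m b)) = (\<Prod>m<d. \<Sum>t<n. g m t)"
proof (induction d arbitrary: g)
  case 0
  then show ?case by simp
next
  case (Suc d)
  have "(\<Sum>b<n ^ Suc d. \<Prod>m<Suc d. g m (digit n m b))
      = (\<Sum>b<n ^ d * n. g 0 (b mod n) * (\<Prod>m<d. g (Suc m) (digit n m (b div n))))"
    by (simp add: prod.lessThan_Suc_shift digit_0 digit_Suc mult.commute del: prod.lessThan_Suc)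
  also have "\<dots> = (\<Sum>q<n ^ d. \<Sum>t<n. g 0 t * (\<Prod>m<d. g (Suc m) (digit n m q)))"
    unfolding sum_lessThan_mult_split using assms by (intro sum.cong refl) auto
  also have "\<dots> = (\<Sum>t<n. g 0 t) * (\<Sum>q<n ^ d. \<Prod>m<d. g (Suc m) (digit n m q))"
    by (simp add: sum_distrib_left sum_distrib_right mult.commute)
  also have "\<dots> = (\<Sum>t<n. g 0 t) * (\<Prod>m<d. \<Sum>t<n. g (Suc m) t)"
    using Suc.IH[of "\<lambda>m. g (Suc m)"] by simp
  also have "\<dots> = (\<Prod>m<Suc d. \<Sum>t<n. g m t)"
    by (simp add: prod.lessThan_Suc_shift del: prod.lessThan_Suc)
  finally show ?case .
qed

lemma sum_add_char_linear_digits: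
  assumes "n > 0"
  shows "(\<Sum>b<n ^ d. add_char n (\<Sum>m<d. c m * int (digit n m b)))
       = (if \<forall>m<d. int n dvd c m then of_nat (n ^ d) else 0)"
proof -
  have "(\<Sum>b<n ^ d. add_char n (\<Sum>m<d. c m * int (digit n m b)))
      = (\<Prod>m<d. \<Sum>t<n. add_char n (c m * int t))"
    unfolding add_char_sum by (rule sum_digits_prod[OF assms])
  also have "\<dots> = (\<Prod>m<d. if int n dvd c m then of_nat n else 0)"
    by (simp add: sum_add_char_multiples[OF assms])
  also have "\<dots> = (if \<forall>m<d. int n dvd c m then of_nat (n ^ d) else 0)"
    by (auto simp: prod_zero_iff)
  finally show ?thesis .
qed

section \<open>Orthogonality of the rows of the partially transposed matrix\<close>

definition ptrans_exponent ::
    "nat set \<Rightarrow> nat \<Rightarrow> (nat \<Rightarrow> nat \<Rightarrow> int) \<Rightarrow> (nat \<Rightarrow> int) \<Rightarrow> (nat \<Rightarrow> int) \<Rightarrow> int" where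
  "ptrans_exponent \<kappa> d T A B =
     (\<Sum>k<d. \<Sum>l<d. (if k \<in> \<kappa> then B k else A k) * T k l * (if l \<in> \<kappa> then A l else B l))"

lemma ptrans_W_mat_entry:
  assumes "n > 0" and "a < n ^ d" and "b < n ^ d"
  shows "ptrans n d \<kappa> (W_mat n d T) $$ (a, b)
       = add_char n (ptrans_exponent \<kappa> d T (\<lambda>k. int (digit n k a)) (\<lambda>k. int (digit n k b)))"
proof -
  define f where "f k = (if k \<in> \<kappa> then digit n k b else digit n k a)" for k
  define g where "g k = (if k \<in> \<kappa> then digit n k a else digit n k b)" for k
  have "\<forall>k<d. f k < n" and "\<forall>k<d. g k < n"
    using assms(1) by (auto simp: f_def g_def digit_less)
  then have "tup_enc n d f < n ^ d" and "tup_enc n d g < n ^ d"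
    and "\<And>k. k < d \<Longrightarrow> digit n k (tup_enc n d f) = f k"
    and "\<And>k. k < d \<Longrightarrow> digit n k (tup_enc n d g) = g k"
    by (simp_all add: tup_enc_less digit_tup_enc)
  have "ptrans n d \<kappa> (W_mat n d T) $$ (a, b) = W_mat n d T $$ (tup_enc n d f, tup_enc n d g)"
    unfolding f_def g_def using assms(2,3) by (simp add: ptrans_def W_mat_def)
  also have "\<dots> = add_char n (\<Sum>k<d. \<Sum>l<d. int (f k) * T k l * int (g l))"
    using assms(1) \<open>tup_enc n d f < n ^ d\<close> \<open>tup_enc n d g < n ^ d\<close>
    by (simp add: W_mat_def cis_power_mod_eq_add_char digit_tup_enc \<open>\<forall>k<d. f k < n\<close> \<open>\<forall>k<d. g k < n\<close>)
  finally show ?thesis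
    by (simp add: ptrans_exponent_def f_def g_def if_distrib[of int])
qed

lemma sum_lessThan_split_subset:
  fixes d :: nat
  assumes "\<kappa> \<subseteq> {..<d}"
  shows "(\<Sum>i<d. h i) = (\<Sum>i\<in>\<kappa>. h i) + (\<Sum>i\<in>{..<d} - \<kappa>. h i)"
  using sum.subset_diff[OF assms finite_lessThan] by (simp add: add.commute)

lemma sum_lessThan_split_blocks:
  fixes f :: "nat \<Rightarrow> nat \<Rightarrow> 'a :: comm_monoid_add"
  assumes "\<kappa> \<subseteq> {..<d}"
  shows "(\<Sum>k<d. \<Sum>l<d. f k l)
       = (\<Sum>k\<in>\<kappa>. \<Sum>l\<in>\<kappa>. f k l) + (\<Sum>k\<in>\<kappa>. \<Sum>l\<in>{..<d} - \<kappa>. f k l)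
       + (\<Sum>k\<in>{..<d} - \<kappa>. \<Sum>l\<in>\<kappa>. f k l) + (\<Sum>k\<in>{..<d} - \<kappa>. \<Sum>l\<in>{..<d} - \<kappa>. f k l)"
  by (simp add: sum_lessThan_split_subset[OF assms] sum.distrib ac_simps)

lemma ptrans_exponent_blocks:
  assumes "\<kappa> \<subseteq> {..<d}"
  defines "L \<equiv> {..<d} - \<kappa>"
  shows "ptrans_exponent \<kappa> d T A B
       = (\<Sum>k\<in>\<kappa>. \<Sum>l\<in>\<kappa>. B k * T k l * A l) + (\<Sum>k\<in>\<kappa>. \<Sum>l\<in>L. B k * T k l * B l)
       + (\<Sum>k\<in>L. \<Sum>l\<in>\<kappa>. A k * T k l * A l) + (\<Sum>k\<in>L. \<Sum>l\<in>L. A k * T k l * B l)"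
  unfolding ptrans_exponent_def sum_lessThan_split_blocks[OF assms(1)] L_def
  by (intro arg_cong2[where f = plus] sum.cong refl) auto

definition ptrans_coeff :: "nat set \<Rightarrow> nat \<Rightarrow> (nat \<Rightarrow> nat \<Rightarrow> int) \<Rightarrow> (nat \<Rightarrow> int) \<Rightarrow> nat \<Rightarrow> int" where
  "ptrans_coeff \<kappa> d T V m =
     (if m \<in> \<kappa> then \<Sum>l\<in>\<kappa>. T m l * V l else \<Sum>k\<in>{..<d} - \<kappa>. V k * T k m)"

text \<open>The block \<open>\<kappa> \<times> L\<close> is the only one quadratic in \<open>B\<close>; it does not involve \<open>A\<close> and cancels.\<close>

lemma ptrans_exponent_diff:
  assumes "\<kappa> \<subseteq> {..<d}"
  shows "ptrans_exponent \<kappa> d T A B - ptrans_exponent \<kappa> d T A' B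
       = ptrans_exponent \<kappa> d T A (\<lambda>_. 0) - ptrans_exponent \<kappa> d T A' (\<lambda>_. 0)
         + (\<Sum>m<d. ptrans_coeff \<kappa> d T (\<lambda>k. A k - A' k) m * B m)"
proof -
  define L where "L = {..<d} - \<kappa>"
  define c where "c = ptrans_coeff \<kappa> d T (\<lambda>k. A k - A' k)"
  have "(\<Sum>k\<in>\<kappa>. \<Sum>l\<in>\<kappa>. B k * T k l * A l) - (\<Sum>k\<in>\<kappa>. \<Sum>l\<in>\<kappa>. B k * T k l * A' l)
      = (\<Sum>m\<in>\<kappa>. c m * B m)"
    unfolding c_def ptrans_coeff_def
    by (simp add: sum_subtractf[symmetric] sum_distrib_left sum_distrib_right algebra_simps)
  moreover have "(\<Sum>k\<in>L. \<Sum>l\<in>L. A k * T k l * B l) - (\<Sum>k\<in>L. \<Sum>l\<in>L. A' k * T k l * B l)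
      = (\<Sum>m\<in>L. c m * B m)"
    unfolding c_def ptrans_coeff_def L_def
    by (subst (1 2) sum.swap)
       (simp add: sum_subtractf[symmetric] sum_distrib_left sum_distrib_right algebra_simps)
  moreover have "(\<Sum>m<d. c m * B m) = (\<Sum>m\<in>\<kappa>. c m * B m) + (\<Sum>m\<in>L. c m * B m)"
    unfolding L_def by (rule sum_lessThan_split_subset[OF assms])
  ultimately show ?thesis
    unfolding ptrans_exponent_blocks[OF assms] c_def[symmetric] L_def[symmetric] by simp
qed

lemma cauchy_mod_ptrans_coeff_dvd_imp_dvd:
  assumes "prime n" and "cauchy_mod n d T" and "\<kappa> \<subseteq> {..<d}"
    and "\<forall>m<d. int n dvd ptrans_coeff \<kappa> d T V m" and "k < d"
  shows "int n dvd V k"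
proof -
  obtain x y :: "nat \<Rightarrow> int" where range: "\<forall>a<d. x a \<in> {0..<int n} \<and> y a \<in> {0..<int n}"
    and "inj_on x {..<d}" and "inj_on y {..<d}"
    and inverse: "\<forall>a<d. \<forall>b<d. (T a b * (x a - y b)) mod int n = 1 mod int n"
    using assms(2) unfolding cauchy_mod_def atLeast0LessThan by blast
  have inj_mod: "inj_on (\<lambda>a. x a mod int n) S" "inj_on (\<lambda>a. y a mod int n) S"
    if "S \<subseteq> {..<d}" for S
    using range \<open>inj_on x {..<d}\<close> \<open>inj_on y {..<d}\<close> that
    by (auto simp: inj_on_def subset_iff)
  have cauchy: "[T a b * (x a - y b) = 1] (mod int n)" if "a < d" and "b < d" for a b
    using inverse that by (simp add: cong_def)
  have "prime (int n)" and "finite \<kappa>"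
    using assms(1,3) finite_subset by auto
  show ?thesis
  proof (cases "k \<in> \<kappa>")
    case True
    show ?thesis
    proof (rule cauchy_right_kernel_mod_prime[where A = \<kappa> and B = \<kappa> and x = x and y = y and C = T])
      show "int n dvd (\<Sum>b\<in>\<kappa>. T a b * V b)" if "a \<in> \<kappa>" for a
        using assms(3,4) that by (force simp: ptrans_coeff_def)
      show "[T a b * (x a - y b) = 1] (mod int n)" if "a \<in> \<kappa>" and "b \<in> \<kappa>" for a b
        using cauchy assms(3) that by blast
    qed (use True assms(3) \<open>prime (int n)\<close> \<open>finite \<kappa>\<close> inj_mod in auto)
  next
    case False
    show ?thesis
    proof (rule cauchy_left_kernel_mod_prime[where A = "{..<d} - \<kappa>" and B = "{..<d} - \<kappa>" and x = x and y = y and C = T])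
      show "int n dvd (\<Sum>a\<in>{..<d} - \<kappa>. V a * T a b)" if "b \<in> {..<d} - \<kappa>" for b
        using assms(4) that by (auto simp: ptrans_coeff_def)
    qed (use False assms(5) \<open>prime (int n)\<close> inj_mod cauchy in auto)
  qed
qed

lemma ptrans_coeff_digits_dvd_iff:
  assumes "prime n" and "cauchy_mod n d T" and "\<kappa> \<subseteq> {..<d}"
    and "a < n ^ d" and "a' < n ^ d"
  shows "(\<forall>m<d. int n dvd ptrans_coeff \<kappa> d T (\<lambda>k. int (digit n k a) - int (digit n k a')) m)
       \<longleftrightarrow> a = a'"
proof
  assume "\<forall>m<d. int n dvd ptrans_coeff \<kappa> d T (\<lambda>k. int (digit n k a) - int (digit n k a')) m"
  then have "int n dvd int (digit n k a) - int (digit n k a')" if "k < d" for k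
    using cauchy_mod_ptrans_coeff_dvd_imp_dvd[OF assms(1-3) _ that,
        where V = "\<lambda>k. int (digit n k a) - int (digit n k a')"] by simp
  moreover have "n > 0"
    using assms(1) prime_gt_0_nat by blast
  ultimately have "digit n k a = digit n k a'" if "k < d" for k
    using that digit_less[of n k]
    by (metis mod_eq_dvd_iff mod_pos_pos_trivial of_nat_0_le_iff of_nat_eq_iff of_nat_less_iff)
  then show "a = a'"
    using eq_if_digits_eq assms(4,5) by blast
qed (simp add: ptrans_coeff_def)

lemma ptrans_W_mat_rows_orthogonal:
  assumes "prime n" and "cauchy_mod n d T" and "\<kappa> \<subseteq> {..<d}"
    and "a < n ^ d" and "a' < n ^ d"
  defines "M \<equiv> ptrans n d \<kappa> (W_mat n d T)"
  shows "(\<Sum>b<n ^ d. M $$ (a, b) * cnj (M $$ (a', b))) = (if a = a' then of_nat (n ^ d) else 0)"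
proof -
  have "n > 0"
    using assms(1) prime_gt_0_nat by blast
  define A where "A a = (\<lambda>k. int (digit n k a))" for a
  define c where "c = ptrans_coeff \<kappa> d T (\<lambda>k. A a k - A a' k)"
  define K where "K = ptrans_exponent \<kappa> d T (A a) (\<lambda>_. 0) - ptrans_exponent \<kappa> d T (A a') (\<lambda>_. 0)"
  have row_product: "M $$ (a, b) * cnj (M $$ (a', b)) = add_char n K * add_char n (\<Sum>m<d. c m * A b m)"
    if "b < n ^ d" for b
  proof -
    have "M $$ (a, b) * cnj (M $$ (a', b))
        = add_char n (ptrans_exponent \<kappa> d T (A a) (A b) - ptrans_exponent \<kappa> d T (A a') (A b))"
      using that assms(4,5) \<open>n > 0\<close>
      by (simp add: M_def A_def ptrans_W_mat_entry add_char_cnj flip: add_char_add)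
    also have "\<dots> = add_char n K * add_char n (\<Sum>m<d. c m * A b m)"
      by (subst ptrans_exponent_diff[OF assms(3)]) (simp add: K_def c_def add_char_add)
    finally show ?thesis .
  qed
  have "(\<forall>m<d. int n dvd c m) \<longleftrightarrow> a = a'"
    unfolding c_def A_def using assms(1-5) by (rule ptrans_coeff_digits_dvd_iff)
  moreover have "K = 0" if "a = a'"
    using that by (simp add: K_def)
  moreover have "(\<Sum>b<n ^ d. M $$ (a, b) * cnj (M $$ (a', b)))
      = add_char n K * (\<Sum>b<n ^ d. add_char n (\<Sum>m<d. c m * A b m))"
    by (simp add: row_product sum_distrib_left)
  ultimately show ?thesis
    by (simp add: sum_add_char_linear_digits[OF \<open>n > 0\<close>] A_def)
qed

lemma rank_full_if_rows_orthogonal: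
  fixes M :: "complex mat"
  assumes "M \<in> carrier_mat N N" and "c \<noteq> 0"
    and "\<And>i j. i < N \<Longrightarrow> j < N \<Longrightarrow> (\<Sum>b<N. M $$ (i, b) * cnj (M $$ (j, b))) = (if i = j then c else 0)"
  shows "vec_space.rank N M = N"
proof -
  define C where "C = mat N N (\<lambda>(i, j). cnj (M $$ (j, i)))"
  have "C \<in> carrier_mat N N"
    by (simp add: C_def)
  have "M * C = c \<cdot>\<^sub>m 1\<^sub>m N"
  proof (rule eq_matI)
    fix i j assume "i < dim_row (c \<cdot>\<^sub>m 1\<^sub>m N)" and "j < dim_col (c \<cdot>\<^sub>m 1\<^sub>m N)"
    then have "i < N" and "j < N"
      by simp_all
    then show "(M * C) $$ (i, j) = (c \<cdot>\<^sub>m 1\<^sub>m N) $$ (i, j)"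
      using assms(1) assms(3)[of i j]
      by (simp add: C_def scalar_prod_def atLeast0LessThan)
  qed (use assms(1) \<open>C \<in> carrier_mat N N\<close> in auto)
  then have "det M * det C = c ^ N"
    using det_mult[OF assms(1) \<open>C \<in> carrier_mat N N\<close>] by simp
  then have "det M \<noteq> 0"
    using assms(2) by auto
  then show ?thesis
    using vec_space.det_rank_iff[OF assms(1)] by blast
qed

theorem proposition6p8:
  fixes n d :: nat and T :: "nat \<Rightarrow> nat \<Rightarrow> int" and \<kappa> :: "nat set"
  assumes "even d" and "prime n" and "n > 2 * d"
    and "cauchy_mod n d T"
    and "\<kappa> \<subseteq> {0..<d}"
  shows "vec_space.rank (n ^ d) (ptrans n d \<kappa> (W_mat n d T)) = n ^ d"
proof (rule rank_full_if_rows_orthogonal)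
  show "ptrans n d \<kappa> (W_mat n d T) \<in> carrier_mat (n ^ d) (n ^ d)"
    by (simp add: ptrans_def W_mat_def)
  show "complex_of_nat (n ^ d) \<noteq> 0"
    using assms(2) prime_gt_0_nat by simp
  show "(\<Sum>b<n ^ d. ptrans n d \<kappa> (W_mat n d T) $$ (i, b) * cnj (ptrans n d \<kappa> (W_mat n d T) $$ (j, b)))
      = (if i = j then of_nat (n ^ d) else 0)" if "i < n ^ d" and "j < n ^ d" for i j
    using ptrans_W_mat_rows_orthogonal assms(2,4,5) that by (simp add: atLeast0LessThan)
qed

end
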